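(* Let $(X,\|\cdot\|)$ be a Banach space, $A,B\subset X$ nonempty, and suppose $A$ is a uniformly convex set. Then the ordered pair $(A,B)$ has the $UC$ property.
   Context: The metric is $\rho(x,y)=\|x-y\|$; $\mathrm{dist}(A,B)=\inf\{\|a-b\|:a\in A,b\in B\}$; $B(x_0,r)=\{x\in X:\|x-x_0\|<r\}$. A set $A\subset X$ is a uniformly convex set if for every $\varepsilon>0$ there exists $\eta(\varepsilon)>0$ such that for all $x,y\in A$ with $\|x-y\|\ge\varepsilon$ one has $B\left(\frac{x+y}{2},\eta(\varepsilon)\right)\subset A$. The ordered pair $(A,B)$ has the $UC$ property if for all sequences $\{x_n\},\{z_n\}\subset A$, $\{y_n\}\subset B$ with $\lim_n\|x_n-y_n\|=\lim_n\|z_n-y_n\|=\mathrm{dist}(A,B)$ one has $\lim_n\|x_n-z_n\|=0$. *)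

theory Defs
  imports "HOL-Analysis.Analysis"
begin

definition uniformly_convex_set :: "'a::real_normed_vector set \<Rightarrow> bool" where
  "uniformly_convex_set A \<longleftrightarrow>
     (\<forall>\<epsilon>>0. \<exists>\<eta>>0. \<forall>x\<in>A. \<forall>y\<in>A. norm (x - y) \<ge> \<epsilon> \<longrightarrow>
        ball ((1/2) *\<^sub>R (x + y)) \<eta> \<subseteq> A)"

text \<open>The UC property of the ordered pair (A,B); dist(A,B) is the library setdist
  (the infimum of distances, for nonempty sets).\<close>
definition UC_property :: "'a::real_normed_vector set \<Rightarrow> 'a set \<Rightarrow> bool" where
  "UC_property A B \<longleftrightarrow>
     (\<forall>x z y. (\<forall>n. x n \<in> A) \<longrightarrow> (\<forall>n. z n \<in> A) \<longrightarrow> (\<forall>n. y n \<in> B) \<longrightarrow>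
        (\<lambda>n. norm (x n - y n)) \<longlonglongrightarrow> setdist A B \<longrightarrow>
        (\<lambda>n. norm (z n - y n)) \<longlonglongrightarrow> setdist A B \<longrightarrow>
        (\<lambda>n. norm (x n - z n)) \<longlonglongrightarrow> 0)"

end

theory Submission
  imports Defs
begin

text \<open>If x, z \<in> A are \<epsilon> apart, uniform convexity puts a ball of radius \<eta> around their
  midpoint inside A. If moreover both are within dist(A,B) + \<eta>/2 of some y \<in> B, so is the
  midpoint, and stepping from it by \<eta>/2 towards y stays in A yet ends closer to y than
  dist(A,B). When dist(A,B) = 0 the triangle inequality suffices.\<close>

lemma setdist_add_radius_le_dist:
  fixes m y :: "'a::real_normed_vector"
  assumes "cball m e \<subseteq> A" "y \<in> B" "0 \<le> e" "0 < setdist A B"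
  shows "setdist A B + e \<le> dist m y"
proof (rule ccontr)
  assume "\<not> setdist A B + e \<le> dist m y"
  then have close: "dist m y < setdist A B + e" by simp
  define r where "r = dist m y"
  have "e < r"
  proof (rule ccontr)
    assume "\<not> e < r"
    then have "y \<in> A" using assms(1) by (auto simp: r_def)
    then have "setdist A B \<le> dist y y" using assms(2) setdist_le_dist by blast
    then show False using assms(4) by simp
  qed
  then have r0: "0 < r" using assms(3) by linarith
  define w where "w = m + (e / r) *\<^sub>R (y - m)"
  have "dist m w = e"
    using r0 assms(3) by (simp add: w_def dist_norm r_def norm_minus_commute)
  then have "w \<in> A" using assms(1) by auto
  have "w - y = (1 - e / r) *\<^sub>R (m - y)"
    by (simp add: w_def algebra_simps)
  moreover have "0 \<le> 1 - e / r" using \<open>e < r\<close> r0 by (simp add: field_simps)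
  ultimately have "dist w y = (1 - e / r) * r"
    by (simp add: dist_norm r_def)
  also have "\<dots> = r - e" using r0 by (simp add: field_simps)
  finally have "dist w y < setdist A B" using close by (simp add: r_def)
  moreover have "setdist A B \<le> dist w y" using \<open>w \<in> A\<close> assms(2) setdist_le_dist by blast
  ultimately show False by simp
qed

lemma dist_midpoint_le_average:
  fixes x z y :: "'a::real_normed_vector"
  shows "dist ((1/2) *\<^sub>R (x + z)) y \<le> (dist x y + dist z y) / 2"
proof -
  have "(1/2) *\<^sub>R (x + z) - y = (1/2) *\<^sub>R ((x - y) + (z - y))"
    by (simp add: algebra_simps flip: scaleR_add_left)
  then have "dist ((1/2) *\<^sub>R (x + z)) y = norm ((x - y) + (z - y)) / 2"
    by (simp add: dist_norm)
  also have "\<dots> \<le> (dist x y + dist z y) / 2"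
    using norm_triangle_ineq by (simp add: dist_norm divide_right_mono)
  finally show ?thesis .
qed

lemma tendsto_dist_zero_common_point:
  fixes x z y :: "nat \<Rightarrow> 'a::real_normed_vector"
  assumes "(\<lambda>n. norm (x n - y n)) \<longlonglongrightarrow> 0" "(\<lambda>n. norm (z n - y n)) \<longlonglongrightarrow> 0"
  shows "(\<lambda>n. norm (x n - z n)) \<longlonglongrightarrow> 0"
proof (rule Lim_null_comparison)
  have "norm (x n - z n) \<le> norm (x n - y n) + norm (z n - y n)" for n
    using norm_triangle_ineq4[of "x n - y n" "z n - y n"] by simp
  then show "\<forall>\<^sub>F n in sequentially. norm (norm (x n - z n)) \<le> norm (x n - y n) + norm (z n - y n)"
    by simp
  show "(\<lambda>n. norm (x n - y n) + norm (z n - y n)) \<longlonglongrightarrow> 0"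
    using tendsto_add[OF assms] by simp
qed

lemma uniformly_convex_set_near_pair_close:
  fixes A B :: "'a::real_normed_vector set"
  assumes "uniformly_convex_set A" "0 < setdist A B" "0 < \<epsilon>"
  obtains \<delta> where "0 < \<delta>"
    "\<And>x z y. x \<in> A \<Longrightarrow> z \<in> A \<Longrightarrow> y \<in> B \<Longrightarrow>
       dist x y < setdist A B + \<delta> \<Longrightarrow> dist z y < setdist A B + \<delta> \<Longrightarrow> dist x z < \<epsilon>"
proof -
  obtain \<eta> where "0 < \<eta>" and ball: "\<forall>x\<in>A. \<forall>z\<in>A. \<epsilon> \<le> norm (x - z) \<longrightarrow>
      ball ((1/2) *\<^sub>R (x + z)) \<eta> \<subseteq> A"
    using assms(1,3) unfolding uniformly_convex_set_def by blast
  have close: "dist x z < \<epsilon>"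
    if "x \<in> A" "z \<in> A" "y \<in> B" "dist x y < setdist A B + \<eta>/2" "dist z y < setdist A B + \<eta>/2"
    for x z y
  proof (rule ccontr)
    assume "\<not> dist x z < \<epsilon>"
    then have "ball ((1/2) *\<^sub>R (x + z)) \<eta> \<subseteq> A"
      using ball that(1,2) by (simp add: dist_norm)
    moreover have "cball ((1/2) *\<^sub>R (x + z)) (\<eta>/2) \<subseteq> ball ((1/2) *\<^sub>R (x + z)) \<eta>"
      using \<open>0 < \<eta>\<close> by (auto simp: subset_eq)
    ultimately have "cball ((1/2) *\<^sub>R (x + z)) (\<eta>/2) \<subseteq> A"
      by (rule subset_trans[rotated])
    then have "setdist A B + \<eta>/2 \<le> dist ((1/2) *\<^sub>R (x + z)) y"
      using setdist_add_radius_le_dist[OF _ that(3) _ assms(2)] \<open>0 < \<eta>\<close> by simp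
    also have "\<dots> < setdist A B + \<eta>/2"
      using dist_midpoint_le_average[of x z y] that(4,5) by argo
    finally show False by simp
  qed
  show ?thesis
    using that[of "\<eta>/2"] close \<open>0 < \<eta>\<close> by simp
qed

theorem theorem37:
  fixes A B :: "'a::banach set"
  assumes "A \<noteq> {}" and "B \<noteq> {}"
    and "uniformly_convex_set A"
  shows "UC_property A B"
  unfolding UC_property_def
proof (intro allI impI)
  fix x z y :: "nat \<Rightarrow> 'a"
  assume xA: "\<forall>n. x n \<in> A" and zA: "\<forall>n. z n \<in> A" and yB: "\<forall>n. y n \<in> B"
    and lx: "(\<lambda>n. norm (x n - y n)) \<longlonglongrightarrow> setdist A B"
    and lz: "(\<lambda>n. norm (z n - y n)) \<longlonglongrightarrow> setdist A B"
  show "(\<lambda>n. norm (x n - z n)) \<longlonglongrightarrow> 0"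
  proof (cases "setdist A B = 0")
    case True
    then show ?thesis using tendsto_dist_zero_common_point lx lz by simp
  next
    case False
    then have pos: "0 < setdist A B" using setdist_pos_le[of A B] by linarith
    show ?thesis
    proof (rule tendstoI)
      fix \<epsilon> :: real assume "0 < \<epsilon>"
      then obtain \<delta> where "0 < \<delta>" and close: "\<And>x z y. x \<in> A \<Longrightarrow> z \<in> A \<Longrightarrow> y \<in> B \<Longrightarrow>
          dist x y < setdist A B + \<delta> \<Longrightarrow> dist z y < setdist A B + \<delta> \<Longrightarrow> dist x z < \<epsilon>"
        using uniformly_convex_set_near_pair_close[OF assms(3) pos] by blast
      have "\<forall>\<^sub>F n in sequentially. norm (x n - y n) < setdist A B + \<delta>"
        "\<forall>\<^sub>F n in sequentially. norm (z n - y n) < setdist A B + \<delta>"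
        using order_tendstoD(2)[OF lx] order_tendstoD(2)[OF lz] \<open>0 < \<delta>\<close> by simp_all
      then show "\<forall>\<^sub>F n in sequentially. dist (norm (x n - z n)) 0 < \<epsilon>"
        by eventually_elim (use close[OF xA[rule_format] zA[rule_format] yB[rule_format]] in \<open>simp add: dist_norm\<close>)
    qed
  qed
qed

end
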